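(* Let $d\ge2$ and let $g,g_0,\dots,g_d$ be positive integers with $g=\mathrm{lcm}(g_0,\dots,g_d)$. Let $A=(\alpha_0,\dots,\alpha_d)$ be positive integers with $\sum_{i=0}^d1/\alpha_i=1/g$, and let $w=(w_0,\dots,w_d)$ with $w_i=t_A/\alpha_i$, $t_A=\mathrm{lcm}(\alpha_0,\dots,\alpha_d)$, $|w|=\sum w_i$. Let $P=[v_0\ \cdots\ v_d]$ be a $d\times(d+1)$ integer matrix of the form $$P=\begin{pmatrix}a_{11}&a_{12}&\cdots&a_{1d}&-b_1\\0&a_{22}&\cdots&a_{2d}&-b_2\\\vdots&\ddots&\ddots&\vdots&\vdots\\0&\cdots&0&a_{dd}&-b_d\end{pmatrix}$$ such that for all $k=1,\dots,d$: (i) $a_{kk}\ge1$ and $a_{kk}\mid\alpha_{k-1}$; (ii) $0\le a_{ik}<a_{kk}$ for $1\le i<k$; (iii) $b_kw_d=a_{kk}w_{k-1}+a_{k,k+1}w_k+\dots+a_{kd}w_{d-1}$. Then $\Delta=\Delta(P)$ is a $d$-dimensional lattice simplex containing the origin in its interior, its reduced weight system is $w$, and for $k=0,\dots,d$ the vertex $u_k=(u_{k1},\dots,u_{kd})$ of $\Delta^*$ satisfying $\langle u_k,v_j\rangle=-1$ for all $j\ne k$ is given recursively for $j=1,\dots,d$ by $$u_{kj}=\begin{cases}\dfrac{|w|-w_k}{a_{jj}w_k}-\dfrac{\sum_{l=1}^{j-1}a_{lj}u_{kl}}{a_{jj}},& j=k+1,\\[2mm] \dfrac{-1-\sum_{l=1}^{j-1}a_{lj}u_{kl}}{a_{jj}},&\text{otherwise.}\end{cases}$$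 If moreover $g_ku_k$ is a primitive vector of $\mathbb{Z}^d$ for every $k$, then $\Delta$ has Gorenstein index $g$ and local Gorenstein indices $g_0,\dots,g_d$.
   Context: $\Delta(P)$ is the convex hull of the columns of $P$; its dual is $\Delta^*=\{u:\langle u,v\rangle\ge-1\ \forall v\in\Delta\}$. For an IP lattice simplex (vertices in $\mathbb{Z}^d$, origin in the interior) with vertices $v_0,\dots,v_d$, the weight system is $(q_0,\dots,q_d)$, $q_i=|\det(v_j:j\ne i)|$, and the reduced weight system is it divided by $\gcd(q_0,\dots,q_d)$. The $k$-th local Gorenstein index is the least positive integer $g_k$ with $g_ku_k\in\mathbb{Z}^d$, where $u_k$ is the vertex of $\Delta^*$ with $\langle u_k,v_j\rangle=-1$ for $j\neq k$; the Gorenstein index is the least $g\ge1$ with $g\Delta^*$ integral, equivalently $\mathrm{lcm}(g_0,\dots,g_d)$. *)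

theory Defs
  imports Complex_Main "Jordan_Normal_Form.Determinant"
begin

text \<open>Points of R^d are represented as functions nat => real that vanish outside
  the coordinate index set {1..d}.  A family of d+1 lattice points is a function
  V :: nat => nat => int, where V j is the j-th point (j = 0..d) and V j i its
  i-th coordinate (i = 1..d).\<close>

definition in_Rd :: "nat \<Rightarrow> (nat \<Rightarrow> real) \<Rightarrow> bool" where
  "in_Rd d x \<longleftrightarrow> (\<forall>i. i \<notin> {1..d} \<longrightarrow> x i = 0)"

definition ip :: "nat \<Rightarrow> (nat \<Rightarrow> real) \<Rightarrow> (nat \<Rightarrow> real) \<Rightarrow> real" where
  "ip d u x = (\<Sum>i=1..d. u i * x i)"

definition vec_of :: "(nat \<Rightarrow> int) \<Rightarrow> nat \<Rightarrow> real" where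
  "vec_of v = (\<lambda>i. real_of_int (v i))"

text \<open>The columns of the matrix P: column j (j = 0..d-1) is (a_{1,j+1},...,a_{j+1,j+1},0,...,0),
  the last column (j = d) is -b.\<close>
definition vtx :: "(nat \<Rightarrow> nat \<Rightarrow> int) \<Rightarrow> (nat \<Rightarrow> int) \<Rightarrow> nat \<Rightarrow> nat \<Rightarrow> nat \<Rightarrow> int" where
  "vtx a b d j i = (if i \<notin> {1..d} then 0 else if j < d then (if i \<le> j + 1 then a i (j + 1) else 0) else - b i)"

definition simplex_hull :: "(nat \<Rightarrow> nat \<Rightarrow> int) \<Rightarrow> nat \<Rightarrow> (nat \<Rightarrow> real) set" where
  "simplex_hull V d = {x. in_Rd d x \<and> (\<exists>c::nat \<Rightarrow> real. (\<forall>j\<le>d. 0 \<le> c j) \<and> (\<Sum>j\<le>d. c j) = 1 \<and>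
       (\<forall>i\<in>{1..d}. x i = (\<Sum>j\<le>d. c j * real_of_int (V j i))))}"

definition aff_indep :: "(nat \<Rightarrow> nat \<Rightarrow> int) \<Rightarrow> nat \<Rightarrow> bool" where
  "aff_indep V d \<longleftrightarrow> (\<forall>c::nat \<Rightarrow> real. (\<Sum>j\<le>d. c j) = 0 \<and>
       (\<forall>i\<in>{1..d}. (\<Sum>j\<le>d. c j * real_of_int (V j i)) = 0) \<longrightarrow> (\<forall>j\<le>d. c j = 0))"

definition origin_in_interior :: "(nat \<Rightarrow> nat \<Rightarrow> int) \<Rightarrow> nat \<Rightarrow> bool" where
  "origin_in_interior V d \<longleftrightarrow> (\<exists>\<epsilon>>0. \<forall>x. in_Rd d x \<and> (\<Sum>i=1..d. (x i)\<^sup>2) < \<epsilon>\<^sup>2 \<longrightarrow> x \<in> simplex_hull V d)"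

definition IP_lattice_simplex :: "(nat \<Rightarrow> nat \<Rightarrow> int) \<Rightarrow> nat \<Rightarrow> bool" where
  "IP_lattice_simplex V d \<longleftrightarrow> aff_indep V d \<and> origin_in_interior V d"

definition dual_poly :: "(nat \<Rightarrow> nat \<Rightarrow> int) \<Rightarrow> nat \<Rightarrow> (nat \<Rightarrow> real) set" where
  "dual_poly V d = {u. in_Rd d u \<and> (\<forall>x\<in>simplex_hull V d. ip d u x \<ge> -1)}"

definition is_vertex :: "(nat \<Rightarrow> real) set \<Rightarrow> (nat \<Rightarrow> real) \<Rightarrow> bool" where
  "is_vertex S u \<longleftrightarrow> u \<in> S \<and> \<not> (\<exists>y z. y \<in> S \<and> z \<in> S \<and> y \<noteq> z \<and> u = (\<lambda>i. (y i + z i) / 2))"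

text \<open>Weight system q_i = |det(v_j : j ~= i)| (columns in increasing order of j).\<close>
definition weight :: "(nat \<Rightarrow> nat \<Rightarrow> int) \<Rightarrow> nat \<Rightarrow> nat \<Rightarrow> int" where
  "weight V d i = \<bar>det (mat d d (\<lambda>(r, c). V (if c < i then c else Suc c) (Suc r)))\<bar>"

definition reduced_weight :: "(nat \<Rightarrow> nat \<Rightarrow> int) \<Rightarrow> nat \<Rightarrow> nat \<Rightarrow> int" where
  "reduced_weight V d i = weight V d i div Gcd (weight V d ` {0..d})"

definition dual_vertex :: "(nat \<Rightarrow> nat \<Rightarrow> int) \<Rightarrow> nat \<Rightarrow> nat \<Rightarrow> nat \<Rightarrow> real" where
  "dual_vertex V d k = (THE u. is_vertex (dual_poly V d) u \<and>
      (\<forall>j\<le>d. j \<noteq> k \<longrightarrow> ip d u (vec_of (V j)) = -1))"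

definition local_gorenstein_index :: "(nat \<Rightarrow> nat \<Rightarrow> int) \<Rightarrow> nat \<Rightarrow> nat \<Rightarrow> nat" where
  "local_gorenstein_index V d k =
     (LEAST n::nat. n \<ge> 1 \<and> (\<forall>j\<in>{1..d}. real n * dual_vertex V d k j \<in> \<int>))"

definition gorenstein_index :: "(nat \<Rightarrow> nat \<Rightarrow> int) \<Rightarrow> nat \<Rightarrow> nat" where
  "gorenstein_index V d =
     (LEAST n::nat. n \<ge> 1 \<and> (\<forall>u. is_vertex (dual_poly V d) u \<longrightarrow> (\<forall>j\<in>{1..d}. real n * u j \<in> \<int>)))"

definition primitive_vec :: "nat \<Rightarrow> (nat \<Rightarrow> int) \<Rightarrow> bool" where
  "primitive_vec d z \<longleftrightarrow> Gcd (z ` {1..d}) = 1"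

end

theory Submission
  imports Defs
begin

text \<open>Condition (iii) says that \<open>\<Sum>j w\<^sub>j v\<^sub>j = 0\<close> with all \<open>w\<^sub>j > 0\<close>. Because the first \<open>d\<close>
  columns of \<open>P\<close> form an invertible upper triangular matrix, for each \<open>k\<close> there is exactly one
  \<open>u\<^sub>k\<close> with \<open>\<langle>u\<^sub>k, v\<^sub>j\<rangle> = -1\<close> for \<open>j < d, j \<noteq> k\<close> and \<open>\<langle>u\<^sub>k, v\<^sub>k\<rangle> = |w|/w\<^sub>k - 1\<close>, and the relation forces
  \<open>\<langle>u\<^sub>k, v\<^sub>d\<rangle>\<close> to take the right value as well; back substitution gives the recursion. Every
  \<open>u\<close> is the affine combination \<open>\<Sum>\<^sub>k w\<^sub>k(\<langle>u,v\<^sub>k\<rangle>+1)/|w| \<cdot> u\<^sub>k\<close>, so the \<open>u\<^sub>k\<close> are the only vertices of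
  \<open>\<Delta>\<^sup>*\<close>; dually, \<open>c\<^sub>k = w\<^sub>k(1 + \<langle>u\<^sub>k,x\<rangle>)/|w|\<close> are barycentric coordinates of \<open>x\<close>, which are positive
  near the origin. The signed maximal minors of \<open>P\<close> form a nonzero vector in the kernel, hence are
  proportional to the primitive vector \<open>w\<close>. Finally, primitivity of \<open>g\<^sub>k u\<^sub>k\<close> means that
  \<open>n u\<^sub>k\<close> is integral exactly when \<open>g\<^sub>k\<close> divides \<open>n\<close>.\<close>

lemma ip_sum_left: "ip d (\<lambda>i. \<Sum>k\<in>K. f k * g k i) x = (\<Sum>k\<in>K. f k * ip d (g k) x)"
  unfolding ip_def by (simp add: sum_distrib_left sum_distrib_right mult.assoc sum.swap[of _ K])

lemma ip_sum_right:
  "ip d u (\<lambda>i. \<Sum>j\<in>J. c j * real_of_int (V j i)) = (\<Sum>j\<in>J. c j * ip d u (vec_of (V j)))"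
  unfolding ip_def vec_of_def by (simp add: sum_distrib_left sum.swap[of _ J] mult_ac)

lemma ip_diff_left: "ip d (\<lambda>i. u i - v i) x = ip d u x - ip d v x"
  unfolding ip_def by (simp add: sum_subtractf left_diff_distrib)

lemma ip_diff_right: "ip d u (\<lambda>i. x i - y i) = ip d u x - ip d u y"
  unfolding ip_def by (simp add: sum_subtractf right_diff_distrib)

lemma ip_add_scaled_left: "ip d (\<lambda>i. u i + e * h i) x = ip d u x + e * ip d h x"
  unfolding ip_def by (simp add: sum.distrib sum_distrib_left distrib_right mult.assoc)

lemma ip_midpoint_left: "ip d (\<lambda>i. (y i + z i) / 2) x = (ip d y x + ip d z x) / 2"
  unfolding ip_def by (simp add: sum.distrib add_divide_distrib sum_divide_distrib distrib_right)

lemma ip_cong_right: "(\<And>i. i \<in> {1..d} \<Longrightarrow> x i = y i) \<Longrightarrow> ip d u x = ip d u y"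
  unfolding ip_def by (intro sum.cong) auto

lemma abs_ip_le:
  assumes "\<forall>i\<in>{1..d}. \<bar>x i\<bar> \<le> e"
  shows "\<bar>ip d u x\<bar> \<le> e * (\<Sum>i=1..d. \<bar>u i\<bar>)"
proof -
  have "\<bar>ip d u x\<bar> \<le> (\<Sum>i=1..d. \<bar>u i * x i\<bar>)" unfolding ip_def by (rule sum_abs)
  also have "\<dots> \<le> (\<Sum>i=1..d. \<bar>u i\<bar> * e)"
    using assms by (intro sum_mono) (auto simp: abs_mult intro: mult_left_mono)
  finally show ?thesis by (simp add: sum_distrib_left mult.commute)
qed

lemma vertex_in_simplex_hull:
  assumes "j \<le> d" and "in_Rd d (vec_of (V j))"
  shows "vec_of (V j) \<in> simplex_hull V d"
proof -
  define c :: "nat \<Rightarrow> real" where "c l = (if l = j then 1 else 0)" for l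
  have "(\<Sum>l\<le>d. c l * real_of_int (V l i)) = (\<Sum>l\<le>d. if l = j then vec_of (V l) i else 0)" for i
    by (intro sum.cong) (simp_all add: c_def vec_of_def)
  then have "(\<Sum>l\<le>d. c l * real_of_int (V l i)) = vec_of (V j) i" for i
    using assms(1) by simp
  moreover have "\<forall>l\<le>d. 0 \<le> c l" "(\<Sum>l\<le>d. c l) = 1"
    using assms(1) by (auto simp: c_def)
  ultimately show ?thesis
    unfolding simplex_hull_def using assms(2) by (auto intro!: exI[of _ c])
qed

lemma dual_poly_iff:
  assumes "\<forall>j\<le>d. in_Rd d (vec_of (V j))"
  shows "u \<in> dual_poly V d \<longleftrightarrow> in_Rd d u \<and> (\<forall>j\<le>d. -1 \<le> ip d u (vec_of (V j)))"
proof
  assume "u \<in> dual_poly V d"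
  then have "in_Rd d u" and "\<forall>x\<in>simplex_hull V d. -1 \<le> ip d u x"
    unfolding dual_poly_def by auto
  then show "in_Rd d u \<and> (\<forall>j\<le>d. -1 \<le> ip d u (vec_of (V j)))"
    using vertex_in_simplex_hull assms by simp
next
  assume u: "in_Rd d u \<and> (\<forall>j\<le>d. -1 \<le> ip d u (vec_of (V j)))"
  have "-1 \<le> ip d u x" if x: "x \<in> simplex_hull V d" for x
  proof -
    obtain c :: "nat \<Rightarrow> real" where c0: "\<forall>j\<le>d. 0 \<le> c j" and c1: "(\<Sum>j\<le>d. c j) = 1"
      and cx: "\<forall>i\<in>{1..d}. x i = (\<Sum>j\<le>d. c j * real_of_int (V j i))"
      using x unfolding simplex_hull_def by blast
    have "(\<Sum>j\<le>d. c j * (-1)) \<le> (\<Sum>j\<le>d. c j * ip d u (vec_of (V j)))"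
      using u c0 by (intro sum_mono mult_left_mono) auto
    also have "\<dots> = ip d u x"
      unfolding ip_sum_right[symmetric] using cx by (intro ip_cong_right) simp
    finally show ?thesis using c1 by (simp add: sum_negf)
  qed
  then show "u \<in> dual_poly V d" unfolding dual_poly_def using u by simp
qed

lemma not_vertex_dual_poly:
  assumes V: "\<forall>j\<le>d. in_Rd d (vec_of (V j))"
    and u: "u \<in> dual_poly V d" and h: "in_Rd d h" "h \<noteq> (\<lambda>_. 0)"
    and slack: "\<forall>j\<le>d. ip d h (vec_of (V j)) \<noteq> 0 \<longrightarrow> -1 < ip d u (vec_of (V j))"
  shows "\<not> is_vertex (dual_poly V d) u"
proof
  assume vertex: "is_vertex (dual_poly V d) u"
  let ?s = "\<lambda>j. ip d u (vec_of (V j)) + 1" and ?t = "\<lambda>j. \<bar>ip d h (vec_of (V j))\<bar>"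
  define J where "J = {j. j \<le> d \<and> ?t j \<noteq> 0}"
  define e where "e = Min (insert 1 ((\<lambda>j. ?s j / ?t j) ` J))"
  have fin: "finite J" unfolding J_def by simp
  have e0: "0 < e" unfolding e_def using fin slack by (auto simp: J_def)
  have e_le: "e * ?t j \<le> ?s j" if "j \<in> J" for j
  proof -
    have "e \<le> ?s j / ?t j" unfolding e_def using fin that by (intro Min_le) auto
    then show ?thesis using that by (simp add: J_def field_simps)
  qed
  have in_dual: "(\<lambda>i. u i + c * h i) \<in> dual_poly V d" if "\<bar>c\<bar> = e" for c
    unfolding dual_poly_iff[OF V]
  proof (intro conjI allI impI)
    show "in_Rd d (\<lambda>i. u i + c * h i)" using u h(1) V by (auto simp: dual_poly_iff in_Rd_def)
  next
    fix j assume j: "j \<le> d"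
    have "\<bar>c * ip d h (vec_of (V j))\<bar> \<le> ?s j"
      using e_le[of j] j u V that by (cases "j \<in> J") (auto simp: J_def abs_mult dual_poly_iff)
    then show "-1 \<le> ip d (\<lambda>i. u i + c * h i) (vec_of (V j))" unfolding ip_add_scaled_left by linarith
  qed
  obtain i where "h i \<noteq> 0" using h(2) by auto
  then have "(\<lambda>i. u i + e * h i) \<noteq> (\<lambda>i. u i + (- e) * h i)" using e0 by (auto dest: fun_cong[of _ _ i])
  moreover have "u = (\<lambda>i. ((u i + e * h i) + (u i + (- e) * h i)) / 2)" by simp
  ultimately show False
    using vertex in_dual[of e] in_dual[of "-e"] e0 unfolding is_vertex_def by fastforce
qed

definition minor_mat :: "(nat \<Rightarrow> nat \<Rightarrow> int) \<Rightarrow> nat \<Rightarrow> nat \<Rightarrow> int mat" where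
  "minor_mat V d i = mat d d (\<lambda>(r, c). V (if c < i then c else Suc c) (Suc r))"

definition signed_minor :: "(nat \<Rightarrow> nat \<Rightarrow> int) \<Rightarrow> nat \<Rightarrow> nat \<Rightarrow> int" where
  "signed_minor V d i = (-1) ^ i * det (minor_mat V d i)"

lemma weight_eq_abs_signed_minor: "weight V d i = \<bar>signed_minor V d i\<bar>"
  unfolding weight_def signed_minor_def minor_mat_def by (simp add: abs_mult)

text \<open>Laplace expansion along the first row of the matrix whose first row repeats row \<open>i\<close>.\<close>

lemma sum_signed_minor_mult:
  assumes i: "i \<in> {1..d}"
  shows "(\<Sum>j\<le>d. signed_minor V d j * V j i) = 0"
proof -
  define N where "N = mat (Suc d) (Suc d) (\<lambda>(r, c). if r = 0 then V c i else V c r)"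
  have N: "N \<in> carrier_mat (Suc d) (Suc d)" unfolding N_def by simp
  have minor: "mat_delete N 0 j = minor_mat V d j" for j
    unfolding mat_delete_def N_def minor_mat_def by (intro eq_matI) auto
  have "0 = det N"
    using i by (intro det_identical_rows[OF N, of 0 i, symmetric]) (auto simp: N_def row_def intro!: eq_vecI)
  also have "\<dots> = (\<Sum>j<Suc d. N $$ (0, j) * cofactor N 0 j)"
    by (rule laplace_expansion_row[OF N]) simp
  also have "\<dots> = (\<Sum>j\<le>d. signed_minor V d j * V j i)"
    by (intro sum.cong) (auto simp: cofactor_def signed_minor_def minor, simp add: N_def)
  finally show ?thesis by simp
qed

lemma proportional_to_coprime:
  fixes q :: "nat \<Rightarrow> int" and w :: "nat \<Rightarrow> nat"
  assumes coprime: "Gcd ((\<lambda>i. int (w i)) ` A) = 1" and W: "W > 0"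
    and proportional: "\<forall>k\<in>A. q k * W = s * int (w k)"
  shows "\<exists>t. \<forall>k\<in>A. q k = t * int (w k)"
proof -
  have "W dvd s * int (w k)" if "k \<in> A" for k
    using proportional that by (metis dvd_triv_right)
  then have "W dvd Gcd ((*) s ` (\<lambda>i. int (w i)) ` A)" by (intro Gcd_greatest) auto
  also have "Gcd ((*) s ` (\<lambda>i. int (w i)) ` A) = \<bar>s\<bar>" unfolding Gcd_mult coprime by simp
  finally obtain t where "s = W * t" by (auto elim: dvdE)
  then show ?thesis using proportional W by (auto intro!: exI[of _ t] simp: mult_ac)
qed

lemma reduced_weight_eqI:
  fixes w :: "nat \<Rightarrow> nat"
  assumes coprime: "Gcd ((\<lambda>i. int (w i)) ` {0..d}) = 1"
    and proportional: "\<forall>k\<le>d. weight V d k = t * int (w k)" and t: "t > 0"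
  shows "\<forall>k\<le>d. reduced_weight V d k = int (w k)"
proof -
  have "weight V d ` {0..d} = (*) t ` (\<lambda>i. int (w i)) ` {0..d}"
    unfolding image_image using proportional by (intro image_cong) auto
  then have "Gcd (weight V d ` {0..d}) = t" using t by (simp only: Gcd_mult coprime) simp
  then show ?thesis using proportional t by (simp add: reduced_weight_def)
qed

lemma Lcm_div_pos:
  fixes \<alpha> :: "'a \<Rightarrow> nat"
  assumes "finite A" and pos: "\<forall>i\<in>A. 0 < \<alpha> i" and "i \<in> A"
  shows "0 < Lcm (\<alpha> ` A) div \<alpha> i"
proof -
  have "Lcm (\<alpha> ` A) \<noteq> 0" using assms by (subst Lcm_0_iff) auto
  then have "\<alpha> i \<le> Lcm (\<alpha> ` A)" using \<open>i \<in> A\<close> by (intro dvd_imp_le dvd_Lcm) auto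
  then show ?thesis using pos \<open>i \<in> A\<close> by (simp add: div_greater_zero_iff)
qed

lemma Gcd_Lcm_div_eq_1:
  fixes \<alpha> :: "'a \<Rightarrow> nat"
  assumes "finite A" "A \<noteq> {}" and pos: "\<forall>i\<in>A. 0 < \<alpha> i"
  shows "Gcd ((\<lambda>i. int (Lcm (\<alpha> ` A) div \<alpha> i)) ` A) = 1"
proof -
  define L where "L = Lcm (\<alpha> ` A)"
  define G where "G = Gcd ((\<lambda>i. L div \<alpha> i) ` A)"
  have "L \<noteq> 0" unfolding L_def using assms by (subst Lcm_0_iff) auto
  have L_eq: "L = \<alpha> i * (L div \<alpha> i)" if "i \<in> A" for i
    using that unfolding L_def by (simp add: dvd_Lcm)
  have G_dvd: "G dvd L div \<alpha> i" if "i \<in> A" for i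
    unfolding G_def using that by (intro Gcd_dvd) auto
  obtain i0 where "i0 \<in> A" using assms(2) by blast
  then have "G dvd L" using L_eq G_dvd by (metis dvd_mult)
  then obtain m where m: "L = G * m" by (elim dvdE)
  then have "G \<noteq> 0" "0 < m" using \<open>L \<noteq> 0\<close> by auto
  have "\<alpha> i dvd m" if i: "i \<in> A" for i
  proof -
    obtain n where n: "L div \<alpha> i = G * n" using G_dvd[OF i] by (elim dvdE)
    have "G * m = G * (\<alpha> i * n)" using L_eq[OF i] m n by (metis mult.left_commute)
    then show ?thesis using \<open>G \<noteq> 0\<close> by simp
  qed
  then have "L dvd m" unfolding L_def by (intro Lcm_least) auto
  then have "G * m \<le> 1 * m" using \<open>0 < m\<close> m by (simp add: dvd_imp_le)
  then have "G = 1" using \<open>G \<noteq> 0\<close> \<open>0 < m\<close> by simp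
  then show ?thesis
    using Gcd_int_eq[of "(\<lambda>i. L div \<alpha> i) ` A"] by (simp add: G_def L_def image_image)
qed

lemma Least_eq_dvd_generator:
  fixes m :: nat
  assumes "\<And>n. P n \<longleftrightarrow> m dvd n" and "1 \<le> m"
  shows "(LEAST n. 1 \<le> n \<and> P n) = m"
  using assms by (intro Least_equality) (auto intro: dvd_imp_le)

lemma integral_multiple_iff_dvd:
  fixes z :: "nat \<Rightarrow> int" and m n :: nat and u :: "nat \<Rightarrow> real"
  assumes z: "\<forall>j\<in>{1..d}. real_of_int (z j) = real m * u j" and primitive: "primitive_vec d z"
  shows "(\<forall>j\<in>{1..d}. real n * u j \<in> \<int>) \<longleftrightarrow> m dvd n"
proof
  assume integral: "\<forall>j\<in>{1..d}. real n * u j \<in> \<int>"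
  have "int m dvd int n * z j" if j: "j \<in> {1..d}" for j
  proof -
    obtain l where "real n * u j = real_of_int l" using integral j Ints_cases by metis
    then have "real_of_int (int n * z j) = real_of_int (int m * l)" using z j by simp
    then show ?thesis by (simp only: of_int_eq_iff) simp
  qed
  then have "int m dvd Gcd ((*) (int n) ` z ` {1..d})" by (intro Gcd_greatest) auto
  also have "Gcd ((*) (int n) ` z ` {1..d}) = int n"
    using primitive by (simp only: Gcd_mult primitive_vec_def) simp
  finally show "m dvd n" by simp
next
  assume "m dvd n"
  then obtain l where "n = m * l" by (elim dvdE)
  then have "real n * u j = of_int (int l * z j)" if "j \<in> {1..d}" for j
    using z that by simp
  then show "\<forall>j\<in>{1..d}. real n * u j \<in> \<int>" by (metis Ints_of_int)
qed

locale triangular_simplex =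
  fixes d :: nat and a :: "nat \<Rightarrow> nat \<Rightarrow> int" and b :: "nat \<Rightarrow> int" and w :: "nat \<Rightarrow> nat"
  assumes diag_pos: "\<forall>k\<in>{1..d}. a k k \<ge> 1"
    and w_pos: "\<forall>i\<le>d. w i > 0"
    and weight_relation: "\<forall>k\<in>{1..d}. b k * int (w d) = (\<Sum>j\<in>{k..d}. a k j * int (w (j - 1)))"
begin

abbreviation "vert j \<equiv> vec_of (vtx a b d j)"

lemma in_Rd_vert: "in_Rd d (vert j)"
  unfolding in_Rd_def vec_of_def vtx_def by auto

lemma ip_vert_pred:
  assumes "j \<in> {1..d}" shows "ip d u (vert (j - 1)) = (\<Sum>i=1..j. u i * a i j)"
proof -
  have "ip d u (vert (j - 1)) = (\<Sum>i=1..d. if i \<le> j then u i * a i j else 0)"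
    unfolding ip_def vec_of_def vtx_def using assms by (intro sum.cong) auto
  also have "\<dots> = (\<Sum>i=1..j. u i * a i j)"
    using assms by (intro sum.mono_neutral_cong_right) auto
  finally show ?thesis .
qed

lemma ip_vert_eq_0_imp_zero:
  assumes "in_Rd d u" and "\<forall>j<d. ip d u (vert j) = 0"
  shows "u = (\<lambda>_. 0)"
proof -
  have "\<forall>i<n. u i = 0" if "n \<le> Suc d" for n
    using that
  proof (induction n)
    case (Suc n)
    have "u n = 0"
    proof (cases "n \<in> {1..d}")
      case True
      have "ip d u (vert (n - 1)) = 0" using assms(2) True by auto
      then have "(\<Sum>i=1..n. u i * a i n) = 0" using ip_vert_pred[OF True] by simp
      moreover have "{1..n} = insert n {1..<n}" using True by auto
      ultimately have "u n * a n n = 0" using Suc by simp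
      moreover have "a n n \<ge> 1" using diag_pos True by simp
      ultimately show ?thesis by simp
    qed (use assms(1) in \<open>auto simp: in_Rd_def\<close>)
    then show ?case using Suc by (auto simp: less_Suc_eq)
  qed simp
  then show ?thesis using assms(1) unfolding in_Rd_def by (auto intro!: ext)
qed

lemma ip_vert_inj:
  assumes "in_Rd d u" "in_Rd d v" "\<forall>j<d. ip d u (vert j) = ip d v (vert j)"
  shows "u = v"
proof -
  have "(\<lambda>i. u i - v i) = (\<lambda>_. 0)"
    using assms by (intro ip_vert_eq_0_imp_zero) (auto simp: in_Rd_def ip_diff_left)
  then show ?thesis by (simp add: fun_eq_iff)
qed

lemma ex_ip_vert_eq:
  fixes c :: "nat \<Rightarrow> real"
  shows "\<exists>u. in_Rd d u \<and> (\<forall>j<d. ip d u (vert j) = c j)"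
proof -
  have "\<exists>u::nat \<Rightarrow> real. (\<forall>i. i \<notin> {1..n} \<longrightarrow> u i = 0) \<and> (\<forall>j<n. (\<Sum>i=1..Suc j. u i * a i (Suc j)) = c j)"
    if "n \<le> d" for n
    using that
  proof (induction n)
    case 0 then show ?case by (auto intro: exI[of _ "\<lambda>_. 0"])
  next
    case (Suc n)
    then obtain u :: "nat \<Rightarrow> real" where u0: "\<forall>i. i \<notin> {1..n} \<longrightarrow> u i = 0"
      and u1: "\<forall>j<n. (\<Sum>i=1..Suc j. u i * a i (Suc j)) = c j" by auto
    define u' where "u' = u(Suc n := (c n - (\<Sum>i=1..n. u i * a i (Suc n))) / a (Suc n) (Suc n))"
    have same: "(\<Sum>i=1..m. u' i * a i l) = (\<Sum>i=1..m. u i * a i l)" if "m \<le> n" for m l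
      using that by (intro sum.cong) (auto simp: u'_def)
    have "a (Suc n) (Suc n) \<ge> 1" using diag_pos Suc.prems by simp
    then have "(\<Sum>i=1..Suc n. u' i * a i (Suc n)) = c n"
      using same[of n "Suc n"] by (simp add: u'_def)
    moreover have "(\<Sum>i=1..Suc j. u' i * a i (Suc j)) = c j" if "j < n" for j
      using u1 that same[of "Suc j" "Suc j"] by simp
    moreover have "\<forall>i. i \<notin> {1..Suc n} \<longrightarrow> u' i = 0" using u0 by (auto simp: u'_def)
    ultimately show ?case using less_Suc_eq by auto
  qed
  then obtain u :: "nat \<Rightarrow> real" where "\<forall>i. i \<notin> {1..d} \<longrightarrow> u i = 0"
    and "\<forall>j<d. (\<Sum>i=1..Suc j. u i * a i (Suc j)) = c j" by blast
  moreover have "ip d u (vert j) = (\<Sum>i=1..Suc j. u i * a i (Suc j))" if "j < d" for j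
    using ip_vert_pred[of "Suc j" u] that by simp
  ultimately show ?thesis by (auto simp: in_Rd_def)
qed

lemma weighted_sum_vtx:
  assumes i: "i \<in> {1..d}" shows "(\<Sum>j\<le>d. int (w j) * vtx a b d j i) = 0"
proof -
  have "(\<Sum>j\<le>d. int (w j) * vtx a b d j i) = (\<Sum>j<d. int (w j) * vtx a b d j i) - int (w d) * b i"
    using i by (simp add: lessThan_Suc_atMost[symmetric] vtx_def)
  also have "(\<Sum>j<d. int (w j) * vtx a b d j i) = (\<Sum>j<d. int (w j) * (if i \<le> Suc j then a i (Suc j) else 0))"
    using i by (intro sum.cong) (auto simp: vtx_def)
  also have "\<dots> = (\<Sum>j\<in>{Suc 0..<Suc d}. int (w (j - 1)) * (if i \<le> j then a i j else 0))"
    unfolding sum.shift_bounds_Suc_ivl by (simp add: lessThan_atLeast0)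
  also have "\<dots> = (\<Sum>j\<in>{i..d}. a i j * int (w (j - 1)))"
    using i by (intro sum.mono_neutral_cong_right) auto
  also have "\<dots> = b i * int (w d)" using weight_relation i by auto
  finally show ?thesis by simp
qed

lemma weighted_sum_ip_vert: "(\<Sum>j\<le>d. real (w j) * ip d u (vert j)) = 0"
proof -
  have "(\<Sum>j\<le>d. real (w j) * ip d u (vert j))
      = (\<Sum>i=1..d. u i * real_of_int (\<Sum>j\<le>d. int (w j) * vtx a b d j i))"
    unfolding ip_def vec_of_def by (simp add: sum_distrib_left sum.swap[of _ "{..d}"] mult_ac)
  also have "\<dots> = 0" using weighted_sum_vtx by simp
  finally show ?thesis .
qed

definition W :: nat where "W = (\<Sum>i\<le>d. w i)"

lemma w_pos_real: "k \<le> d \<Longrightarrow> 0 < real (w k)"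
  using w_pos by simp

lemma w_le_W: "k \<le> d \<Longrightarrow> w k \<le> W"
  unfolding W_def by (rule member_le_sum) auto

lemma W_pos: "0 < real W"
  using w_le_W[of 0] w_pos_real[of 0] by simp

lemma ip_vert_forced:
  assumes k: "k \<le> d" and others: "\<forall>j\<le>d. j \<noteq> k \<longrightarrow> ip d u (vert j) = -1"
  shows "ip d u (vert k) = real W / real (w k) - 1"
proof -
  have "0 = (\<Sum>j\<le>d. real (w j) * ip d u (vert j))" using weighted_sum_ip_vert by simp
  also have "\<dots> = real (w k) * ip d u (vert k) - (\<Sum>j\<in>{..d}-{k}. real (w j))"
    using k others by (simp add: sum.remove[of _ k] sum_negf[symmetric])
  also have "(\<Sum>j\<in>{..d}-{k}. real (w j)) = real W - real (w k)"
    using k by (simp add: W_def sum.remove[of _ k])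
  finally show ?thesis using w_pos_real[OF k] by (simp add: field_simps)
qed

definition U :: "nat \<Rightarrow> nat \<Rightarrow> real" where
  "U k = (SOME u. in_Rd d u \<and> (\<forall>j<d. ip d u (vert j) = (if j = k then real W / real (w k) else 0) - 1))"

lemma in_Rd_U: "in_Rd d (U k)"
  and ip_U_vert_less: "j < d \<Longrightarrow> ip d (U k) (vert j) = (if j = k then real W / real (w k) else 0) - 1"
  using someI_ex[OF ex_ip_vert_eq[of "\<lambda>j. (if j = k then real W / real (w k) else 0) - 1"]]
  unfolding U_def by blast+

text \<open>For \<open>j = d\<close> the value is forced by the relation \<open>\<Sum>j w\<^sub>j v\<^sub>j = 0\<close>.\<close>

lemma ip_U_vert:
  assumes k: "k \<le> d" and j: "j \<le> d"
  shows "ip d (U k) (vert j) = (if j = k then real W / real (w k) else 0) - 1"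
proof (cases "j < d")
  case False
  then have jd: "j = d" using j by simp
  show ?thesis
  proof (cases "k = d")
    case True
    then show ?thesis using ip_vert_forced[OF k] ip_U_vert_less jd by simp
  next
    case False
    have "0 = (\<Sum>j\<le>d. real (w j) * ip d (U k) (vert j))" using weighted_sum_ip_vert by simp
    also have "\<dots> = real (w d) * ip d (U k) (vert d)
        + (\<Sum>j<d. (if j = k then real W else 0) - real (w j))"
      using w_pos_real[OF k] by (simp add: lessThan_Suc_atMost[symmetric] ip_U_vert_less right_diff_distrib
          if_distrib[of "\<lambda>t. real (w _) * t"] cong: if_cong)
    also have "(\<Sum>j<d. (if j = k then real W else 0) - real (w j)) = real (w d)"
      using False k by (simp add: sum_subtractf W_def lessThan_Suc_atMost[symmetric])
    finally have "real (w d) * (ip d (U k) (vert d) + 1) = 0" by (simp add: algebra_simps)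
    then show ?thesis using w_pos_real[of d] jd False by simp
  qed
qed (use ip_U_vert_less in simp)

lemma eq_U_iff:
  assumes k: "k \<le> d" and u: "in_Rd d u"
  shows "u = U k \<longleftrightarrow> (\<forall>j\<le>d. j \<noteq> k \<longrightarrow> ip d u (vert j) = -1)"
proof
  assume others: "\<forall>j\<le>d. j \<noteq> k \<longrightarrow> ip d u (vert j) = -1"
  have "ip d u (vert j) = ip d (U k) (vert j)" if "j < d" for j
    using ip_vert_forced[OF k others] others ip_U_vert[OF k, of j] that by (cases "j = k") auto
  then show "u = U k" using ip_vert_inj[OF u in_Rd_U] by blast
qed (use ip_U_vert[OF k] in simp)

lemma dual_poly_vtx_iff:
  "u \<in> dual_poly (vtx a b d) d \<longleftrightarrow> in_Rd d u \<and> (\<forall>j\<le>d. -1 \<le> ip d u (vert j))"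
  using dual_poly_iff in_Rd_vert by blast

lemma U_in_dual_poly: "k \<le> d \<Longrightarrow> U k \<in> dual_poly (vtx a b d) d"
  using ip_U_vert w_pos_real w_le_W in_Rd_U by (auto simp: dual_poly_vtx_iff)

lemma sum_over_vertices_ip_U:
  assumes k: "k \<le> d"
  shows "(\<Sum>j\<le>d. c j * ip d (U k) (vert j)) = c k * real W / real (w k) - (\<Sum>j\<le>d. c j)"
  using k by (simp add: ip_U_vert right_diff_distrib sum_subtractf if_distrib[of "\<lambda>t. c _ * t"] cong: if_cong)

lemma sum_over_dual_vertices_ip_U:
  assumes j: "j \<le> d"
  shows "(\<Sum>k\<le>d. c k * ip d (U k) (vert j)) = c j * real W / real (w j) - (\<Sum>k\<le>d. c k)"
  using j by (simp add: ip_U_vert right_diff_distrib sum_subtractf if_distrib[of "\<lambda>t. c _ * t"] cong: if_cong)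

lemma affine_combination_U:
  assumes u: "in_Rd d u"
  shows "u = (\<lambda>i. \<Sum>k\<le>d. real (w k) * (ip d u (vert k) + 1) / real W * U k i)"
proof (rule ip_vert_inj[OF u])
  define l where "l k = real (w k) * (ip d u (vert k) + 1) / real W" for k
  have "(\<Sum>k\<le>d. l k) = ((\<Sum>k\<le>d. real (w k) * ip d u (vert k)) + (\<Sum>k\<le>d. real (w k))) / real W"
    unfolding l_def by (simp add: sum_divide_distrib[symmetric] distrib_left sum.distrib)
  also have "\<dots> = 1" using weighted_sum_ip_vert W_pos by (simp add: W_def)
  finally have sum_l: "(\<Sum>k\<le>d. l k) = 1" .
  show "\<forall>j<d. ip d u (vert j) = ip d (\<lambda>i. \<Sum>k\<le>d. l k * U k i) (vert j)"
  proof (intro allI impI)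
    fix j assume j: "j < d"
    have "ip d (\<lambda>i. \<Sum>k\<le>d. l k * U k i) (vert j) = l j * real W / real (w j) - 1"
      using sum_over_dual_vertices_ip_U[of j l] j sum_l by (simp add: ip_sum_left)
    also have "\<dots> = ip d u (vert j)" using W_pos w_pos_real[of j] j by (simp add: l_def)
    finally show "ip d u (vert j) = ip d (\<lambda>i. \<Sum>k\<le>d. l k * U k i) (vert j)" by simp
  qed
qed (use in_Rd_U in \<open>simp add: in_Rd_def\<close>)

lemma is_vertex_U: assumes k: "k \<le> d" shows "is_vertex (dual_poly (vtx a b d) d) (U k)"
  unfolding is_vertex_def
proof (intro conjI notI)
  show "U k \<in> dual_poly (vtx a b d) d" by (rule U_in_dual_poly[OF k])
next
  assume "\<exists>y z. y \<in> dual_poly (vtx a b d) d \<and> z \<in> dual_poly (vtx a b d) d \<and> y \<noteq> z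
    \<and> U k = (\<lambda>i. (y i + z i) / 2)"
  then obtain y z where y: "y \<in> dual_poly (vtx a b d) d" and z: "z \<in> dual_poly (vtx a b d) d"
    and "y \<noteq> z" and mid: "U k = (\<lambda>i. (y i + z i) / 2)" by blast
  have "ip d y (vert j) = -1 \<and> ip d z (vert j) = -1" if "j \<le> d" "j \<noteq> k" for j
  proof -
    have "ip d y (vert j) + ip d z (vert j) = -2"
      using ip_U_vert[OF k, of j] that mid ip_midpoint_left[of d y z "vert j"] by simp
    moreover have "-1 \<le> ip d y (vert j)" "-1 \<le> ip d z (vert j)"
      using y z that by (auto simp: dual_poly_vtx_iff)
    ultimately show ?thesis by linarith
  qed
  then have "y = U k" "z = U k" using eq_U_iff[OF k] y z by (auto simp: dual_poly_vtx_iff)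
  with \<open>y \<noteq> z\<close> show False by simp
qed

text \<open>A vertex \<open>u \<noteq> u\<^sub>k\<close> for all \<open>k\<close> would have two slack facets \<open>j\<^sub>1 \<noteq> j\<^sub>2\<close>, and it could then be
  moved along \<open>u\<^sub>j\<^sub>1 - u\<^sub>j\<^sub>2\<close>, which is orthogonal to all other vertices of \<open>\<Delta>\<close>.\<close>

lemma is_vertex_dual_poly_iff: "is_vertex (dual_poly (vtx a b d) d) u \<longleftrightarrow> (\<exists>k\<le>d. u = U k)"
proof
  assume vertex: "is_vertex (dual_poly (vtx a b d) d) u"
  then have u: "u \<in> dual_poly (vtx a b d) d" unfolding is_vertex_def by blast
  show "\<exists>k\<le>d. u = U k"
  proof (rule ccontr)
    assume not_U: "\<not> (\<exists>k\<le>d. u = U k)"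
    have slack: "\<exists>j\<le>d. j \<noteq> k \<and> -1 < ip d u (vert j)" if "k \<le> d" for k
      using eq_U_iff[OF that] not_U that u by (force simp: dual_poly_vtx_iff)
    obtain j1 where j1: "j1 \<le> d" "-1 < ip d u (vert j1)" using slack[of 0] by auto
    obtain j2 where j2: "j2 \<le> d" "j2 \<noteq> j1" "-1 < ip d u (vert j2)" using slack[OF j1(1)] by auto
    define h where "h = (\<lambda>i. U j1 i - U j2 i)"
    have "U j1 \<noteq> U j2"
      using ip_U_vert[OF j1(1) j1(1)] ip_U_vert[OF j2(1) j1(1)] j2(2) w_pos_real[OF j1(1)] W_pos
      by (auto simp: field_simps)
    then have "h \<noteq> (\<lambda>_. 0)" by (auto simp: h_def fun_eq_iff)
    moreover have "ip d h (vert j) \<noteq> 0 \<longrightarrow> -1 < ip d u (vert j)" if j: "j \<le> d" for j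
    proof -
      have "ip d h (vert j) = (if j = j1 then real W / real (w j1) else 0) - (if j = j2 then real W / real (w j2) else 0)"
        using ip_U_vert[OF j1(1) j] ip_U_vert[OF j2(1) j] by (simp add: h_def ip_diff_left)
      then show ?thesis using j1 j2 by auto
    qed
    moreover have "in_Rd d h" using in_Rd_U by (simp add: h_def in_Rd_def)
    ultimately show False
      using not_vertex_dual_poly[OF _ u] vertex in_Rd_vert by blast
  qed
qed (use is_vertex_U in blast)

lemma weighted_sum_ip_U: "(\<Sum>k\<le>d. real (w k) * ip d (U k) x) = 0"
proof -
  have "(\<lambda>i. \<Sum>k\<le>d. real (w k) * U k i) = (\<lambda>_. 0)"
  proof (rule ip_vert_inj)
    show "\<forall>j<d. ip d (\<lambda>i. \<Sum>k\<le>d. real (w k) * U k i) (vert j) = ip d (\<lambda>_. 0) (vert j)"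
    proof (intro allI impI)
      fix j assume j: "j < d"
      have "ip d (\<lambda>i. \<Sum>k\<le>d. real (w k) * U k i) (vert j) = 0"
        using sum_over_dual_vertices_ip_U[of j "\<lambda>k. real (w k)"] j w_pos_real[of j]
        by (simp add: ip_sum_left W_def)
      then show "ip d (\<lambda>i. \<Sum>k\<le>d. real (w k) * U k i) (vert j) = ip d (\<lambda>_. 0) (vert j)"
        by (simp add: ip_def)
    qed
  qed (use in_Rd_U in \<open>auto simp: in_Rd_def\<close>)
  then have "ip d (\<lambda>i. \<Sum>k\<le>d. real (w k) * U k i) x = 0" by (simp add: ip_def)
  then show ?thesis by (simp add: ip_sum_left)
qed

lemma ip_U_eq_0_imp_zero:
  assumes "\<forall>k\<le>d. ip d (U k) y = 0" and i: "i \<in> {1..d}"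
  shows "y i = 0"
proof -
  define e :: "nat \<Rightarrow> real" where "e l = (if l = i then 1 else 0)" for l
  have "in_Rd d e" using i by (simp add: e_def in_Rd_def)
  have "ip d e y = (\<Sum>l=1..d. if l = i then y l else 0)"
    unfolding ip_def by (intro sum.cong) (simp_all add: e_def)
  then have "y i = ip d e y" using i by simp
  also have "\<dots> = (\<Sum>k\<le>d. real (w k) * (ip d e (vert k) + 1) / real W * ip d (U k) y)"
    by (subst affine_combination_U[OF \<open>in_Rd d e\<close>]) (rule ip_sum_left)
  also have "\<dots> = 0" using assms(1) by simp
  finally show ?thesis .
qed

lemma in_simplex_hull_if_ip_U_ge:
  assumes x: "in_Rd d x" and ge: "\<forall>k\<le>d. -1 \<le> ip d (U k) x"
  shows "x \<in> simplex_hull (vtx a b d) d"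
proof -
  define c where "c k = real (w k) / real W * (1 + ip d (U k) x)" for k
  have c_nonneg: "\<forall>k\<le>d. 0 \<le> c k"
  proof (intro allI impI)
    fix k assume "k \<le> d"
    then have "0 \<le> 1 + ip d (U k) x" using ge by force
    then show "0 \<le> c k" using W_pos by (simp add: c_def)
  qed
  have "(\<Sum>k\<le>d. c k) = ((\<Sum>k\<le>d. real (w k)) + (\<Sum>k\<le>d. real (w k) * ip d (U k) x)) / real W"
    unfolding c_def by (simp add: sum_divide_distrib[symmetric] distrib_left sum.distrib add_divide_distrib)
  also have "\<dots> = 1" using weighted_sum_ip_U W_pos by (simp add: W_def)
  finally have sum_c: "(\<Sum>k\<le>d. c k) = 1" .
  define y where "y = (\<lambda>i. (\<Sum>j\<le>d. c j * real_of_int (vtx a b d j i)) - x i)"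
  have "ip d (U k) y = 0" if k: "k \<le> d" for k
  proof -
    have "ip d (U k) y = (\<Sum>j\<le>d. c j * ip d (U k) (vert j)) - ip d (U k) x"
      unfolding y_def ip_diff_right ip_sum_right ..
    also have "\<dots> = 0"
      using sum_over_vertices_ip_U[OF k, of c] sum_c W_pos w_pos_real[OF k] by (simp add: c_def)
    finally show ?thesis .
  qed
  then have "\<forall>i\<in>{1..d}. y i = 0" using ip_U_eq_0_imp_zero by blast
  then have "\<forall>i\<in>{1..d}. x i = (\<Sum>j\<le>d. c j * real_of_int (vtx a b d j i))"
    unfolding y_def by simp
  then show ?thesis unfolding simplex_hull_def using x c_nonneg sum_c by blast
qed

lemma origin_in_interior_vtx: "origin_in_interior (vtx a b d) d"
  unfolding origin_in_interior_def
proof (intro exI conjI allI impI)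
  define M where "M = 1 + (\<Sum>k\<le>d. \<Sum>i=1..d. \<bar>U k i\<bar>)"
  have M1: "1 \<le> M" unfolding M_def by (simp add: sum_nonneg)
  have M2: "(\<Sum>i=1..d. \<bar>U k i\<bar>) \<le> M" if "k \<le> d" for k
    unfolding M_def using member_le_sum[of k "{..d}" "\<lambda>k. \<Sum>i=1..d. \<bar>U k i\<bar>"] that
    by (simp add: sum_nonneg)
  show "0 < 1 / M" using M1 by simp
  fix x assume x: "in_Rd d x \<and> (\<Sum>i=1..d. (x i)\<^sup>2) < (1 / M)\<^sup>2"
  have "\<bar>x i\<bar> \<le> 1 / M" if i: "i \<in> {1..d}" for i
  proof -
    have "(x i)\<^sup>2 \<le> (\<Sum>i=1..d. (x i)\<^sup>2)" using i by (intro member_le_sum) auto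
    then have "\<bar>x i\<bar>\<^sup>2 < (1 / M)\<^sup>2" using x by simp
    then show ?thesis using M1 power2_less_imp_less[of "\<bar>x i\<bar>" "1 / M"] by simp
  qed
  then have "\<bar>ip d (U k) x\<bar> \<le> 1 / M * M" if "k \<le> d" for k
    using abs_ip_le[of d x "1 / M" "U k"] M2[OF that] M1
    by (meson dual_order.trans mult_left_mono zero_le_divide_1_iff order_trans zero_le_one)
  then have "-1 \<le> ip d (U k) x" if "k \<le> d" for k
    using that M1 by (simp add: abs_le_iff)
  then show "x \<in> simplex_hull (vtx a b d) d"
    using x by (intro in_simplex_hull_if_ip_U_ge) auto
qed

lemma kernel_proportional_to_weights:
  fixes c :: "nat \<Rightarrow> real"
  assumes kernel: "\<forall>i\<in>{1..d}. (\<Sum>j\<le>d. c j * real_of_int (vtx a b d j i)) = 0" and k: "k \<le> d"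
  shows "c k * real W = (\<Sum>j\<le>d. c j) * real (w k)"
proof -
  have "c k * real W / real (w k) - (\<Sum>j\<le>d. c j) = ip d (U k) (\<lambda>i. \<Sum>j\<le>d. c j * real_of_int (vtx a b d j i))"
    using sum_over_vertices_ip_U[OF k, of c] by (simp add: ip_sum_right)
  also have "\<dots> = ip d (U k) (\<lambda>_. 0)" using kernel by (intro ip_cong_right) simp
  also have "\<dots> = 0" by (simp add: ip_def)
  finally show ?thesis using w_pos_real[OF k] by (simp add: field_simps)
qed

lemma aff_indep_vtx: "aff_indep (vtx a b d) d"
  unfolding aff_indep_def using kernel_proportional_to_weights W_pos by fastforce

lemma IP_lattice_simplex_vtx: "IP_lattice_simplex (vtx a b d) d"
  unfolding IP_lattice_simplex_def using aff_indep_vtx origin_in_interior_vtx by simp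

lemma dual_vertex_vtx:
  assumes k: "k \<le> d"
  shows "\<exists>!u. is_vertex (dual_poly (vtx a b d) d) u \<and> (\<forall>j\<le>d. j \<noteq> k \<longrightarrow> ip d u (vert j) = -1)"
    and "dual_vertex (vtx a b d) d k = U k"
proof -
  have "is_vertex (dual_poly (vtx a b d) d) u \<and> (\<forall>j\<le>d. j \<noteq> k \<longrightarrow> ip d u (vert j) = -1)
      \<longleftrightarrow> u = U k" for u
    using is_vertex_U[OF k] eq_U_iff[OF k] in_Rd_U
    by (auto simp: is_vertex_def dual_poly_vtx_iff)
  then show "\<exists>!u. is_vertex (dual_poly (vtx a b d) d) u \<and> (\<forall>j\<le>d. j \<noteq> k \<longrightarrow> ip d u (vert j) = -1)"
    and "dual_vertex (vtx a b d) d k = U k"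
    unfolding dual_vertex_def by auto
qed

lemma U_recursion:
  assumes k: "k \<le> d" and j: "j \<in> {1..d}"
  shows "U k j = (if j = k + 1
             then (real W - real (w k)) / (real_of_int (a j j) * real (w k))
                  - (\<Sum>l\<in>{1..<j}. real_of_int (a l j) * U k l) / real_of_int (a j j)
             else (-1 - (\<Sum>l\<in>{1..<j}. real_of_int (a l j) * U k l)) / real_of_int (a j j))"
proof -
  have "{1..j} = insert j {1..<j}" using j by auto
  then have "U k j * a j j + (\<Sum>l\<in>{1..<j}. real_of_int (a l j) * U k l) = ip d (U k) (vert (j - 1))"
    using ip_vert_pred[OF j, of "U k"] by (simp add: mult.commute)
  also have "\<dots> = (if j = k + 1 then (real W - real (w k)) / real (w k) else -1)"
    using ip_U_vert[OF k, of "j - 1"] j w_pos_real[OF k] by (auto simp: diff_divide_distrib)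
  finally have "U k j * a j j = (if j = k + 1 then (real W - real (w k)) / real (w k) else -1)
      - (\<Sum>l\<in>{1..<j}. real_of_int (a l j) * U k l)" by simp
  moreover have "real_of_int (a j j) \<noteq> 0" using diag_pos j by fastforce
  ultimately have "U k j = ((if j = k + 1 then (real W - real (w k)) / real (w k) else -1)
      - (\<Sum>l\<in>{1..<j}. real_of_int (a l j) * U k l)) / a j j"
    by (simp add: eq_divide_eq)
  then show ?thesis by (simp add: diff_divide_distrib divide_divide_eq_left mult.commute)
qed

lemma signed_minor_last_ne_0: "signed_minor (vtx a b d) d d \<noteq> 0"
proof -
  have car: "minor_mat (vtx a b d) d d \<in> carrier_mat d d" unfolding minor_mat_def by simp
  have "upper_triangular (minor_mat (vtx a b d) d d)"
    unfolding upper_triangular_def minor_mat_def by (auto simp: vtx_def)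
  then have "det (minor_mat (vtx a b d) d d) = prod_list (diag_mat (minor_mat (vtx a b d) d d))"
    using det_upper_triangular car by blast
  moreover have "0 \<notin> set (diag_mat (minor_mat (vtx a b d) d d))"
  proof
    assume "0 \<in> set (diag_mat (minor_mat (vtx a b d) d d))"
    then obtain r where "r < d" "a (Suc r) (Suc r) = 0"
      by (auto simp: diag_mat_def minor_mat_def vtx_def)
    moreover have "a (Suc r) (Suc r) \<ge> 1" using diag_pos \<open>r < d\<close> by simp
    ultimately show False by simp
  qed
  ultimately show ?thesis by (simp add: signed_minor_def)
qed

lemma reduced_weight_vtx:
  assumes coprime: "Gcd ((\<lambda>i. int (w i)) ` {0..d}) = 1"
  shows "\<forall>k\<le>d. reduced_weight (vtx a b d) d k = int (w k)"
proof -
  let ?D = "signed_minor (vtx a b d) d"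
  have "\<forall>i\<in>{1..d}. (\<Sum>j\<le>d. real_of_int (?D j) * real_of_int (vtx a b d j i)) = 0"
  proof
    fix i assume "i \<in> {1..d}"
    then have "real_of_int (\<Sum>j\<le>d. ?D j * vtx a b d j i) = 0" using sum_signed_minor_mult by simp
    then show "(\<Sum>j\<le>d. real_of_int (?D j) * real_of_int (vtx a b d j i)) = 0" by simp
  qed
  then have "real_of_int (?D k * int W) = real_of_int ((\<Sum>j\<le>d. ?D j) * int (w k))" if "k \<le> d" for k
    using kernel_proportional_to_weights[OF _ that] by simp
  then have "\<forall>k\<in>{0..d}. ?D k * int W = (\<Sum>j\<le>d. ?D j) * int (w k)"
    by (simp only: of_int_eq_iff) simp
  moreover have "int W > 0" using W_pos by simp
  ultimately obtain t where t: "\<forall>k\<in>{0..d}. ?D k = t * int (w k)"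
    using proportional_to_coprime[OF coprime] by blast
  have "t \<noteq> 0" using t signed_minor_last_ne_0 by auto
  moreover have "\<forall>k\<le>d. weight (vtx a b d) d k = \<bar>t\<bar> * int (w k)"
    using t by (simp add: weight_eq_abs_signed_minor abs_mult)
  ultimately show ?thesis using reduced_weight_eqI[OF coprime, of "vtx a b d" "\<bar>t\<bar>"] by simp
qed

lemma gorenstein_indices_vtx:
  assumes gl_pos: "\<forall>k\<le>d. 0 < gl k"
    and primitive: "\<forall>k\<le>d. \<exists>z. (\<forall>j\<in>{1..d}. real_of_int (z j) = real (gl k) * U k j) \<and> primitive_vec d z"
  shows "gorenstein_index (vtx a b d) d = Lcm (gl ` {0..d})"
    and "k \<le> d \<Longrightarrow> local_gorenstein_index (vtx a b d) d k = gl k"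
proof -
  have local_iff: "(\<forall>j\<in>{1..d}. real n * U k j \<in> \<int>) \<longleftrightarrow> gl k dvd n" if "k \<le> d" for k n
    using primitive that integral_multiple_iff_dvd by metis
  have global_iff: "(\<forall>u. is_vertex (dual_poly (vtx a b d) d) u \<longrightarrow> (\<forall>j\<in>{1..d}. real n * u j \<in> \<int>))
      \<longleftrightarrow> Lcm (gl ` {0..d}) dvd n" for n
  proof -
    have "(\<forall>u. is_vertex (dual_poly (vtx a b d) d) u \<longrightarrow> (\<forall>j\<in>{1..d}. real n * u j \<in> \<int>))
        \<longleftrightarrow> (\<forall>k\<le>d. \<forall>j\<in>{1..d}. real n * U k j \<in> \<int>)"
      unfolding is_vertex_dual_poly_iff by blast
    also have "\<dots> \<longleftrightarrow> Lcm (gl ` {0..d}) dvd n" using local_iff by (auto simp: Lcm_dvd_iff)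
    finally show ?thesis .
  qed
  have "Lcm (gl ` {0..d}) \<noteq> 0" using gl_pos by (subst Lcm_0_iff) auto
  then have "1 \<le> Lcm (gl ` {0..d})" by linarith
  then show "gorenstein_index (vtx a b d) d = Lcm (gl ` {0..d})"
    unfolding gorenstein_index_def by (intro Least_eq_dvd_generator global_iff)
  show "local_gorenstein_index (vtx a b d) d k = gl k" if "k \<le> d"
    unfolding local_gorenstein_index_def dual_vertex_vtx(2)[OF that]
    using gl_pos that by (intro Least_eq_dvd_generator local_iff) auto
qed

end

theorem proposition5p1:
  fixes d g :: nat and gl \<alpha> w :: "nat \<Rightarrow> nat"
    and a :: "nat \<Rightarrow> nat \<Rightarrow> int" and b :: "nat \<Rightarrow> int"
    and V :: "nat \<Rightarrow> nat \<Rightarrow> int"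
  assumes d2: "d \<ge> 2"
    and gl_pos: "\<forall>k\<le>d. gl k > 0"
    and g_lcm: "g = Lcm (gl ` {0..d})"
    and \<alpha>_pos: "\<forall>i\<le>d. \<alpha> i > 0"
    and \<alpha>_sum: "(\<Sum>i\<le>d. 1 / real (\<alpha> i)) = 1 / real g"
    and w_def: "\<forall>i\<le>d. w i = Lcm (\<alpha> ` {0..d}) div \<alpha> i"
    and cond_i: "\<forall>k\<in>{1..d}. a k k \<ge> 1 \<and> a k k dvd int (\<alpha> (k - 1))"
    and cond_ii: "\<forall>k\<in>{1..d}. \<forall>i\<in>{1..<k}. 0 \<le> a i k \<and> a i k < a k k"
    and cond_iii: "\<forall>k\<in>{1..d}. b k * int (w d) = (\<Sum>j\<in>{k..d}. a k j * int (w (j - 1)))"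
    and V_def: "V = vtx a b d"
  shows "IP_lattice_simplex V d
    \<and> (\<forall>i\<le>d. reduced_weight V d i = int (w i))
    \<and> (\<forall>k\<le>d.
         (\<exists>!u. is_vertex (dual_poly V d) u \<and> (\<forall>j\<le>d. j \<noteq> k \<longrightarrow> ip d u (vec_of (V j)) = -1))
       \<and> (\<forall>j\<in>{1..d}. dual_vertex V d k j =
            (if j = k + 1
             then (real (\<Sum>i\<le>d. w i) - real (w k)) / (real_of_int (a j j) * real (w k))
                  - (\<Sum>l\<in>{1..<j}. real_of_int (a l j) * dual_vertex V d k l) / real_of_int (a j j)
             else (-1 - (\<Sum>l\<in>{1..<j}. real_of_int (a l j) * dual_vertex V d k l)) / real_of_int (a j j))))
    \<and> ((\<forall>k\<le>d. \<exists>z::nat \<Rightarrow> int. (\<forall>j\<in>{1..d}. real_of_int (z j) = real (gl k) * dual_vertex V d k j)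
                             \<and> primitive_vec d z)
       \<longrightarrow> gorenstein_index V d = g \<and> (\<forall>k\<le>d. local_gorenstein_index V d k = gl k))"
proof -
  have w_pos: "\<forall>i\<le>d. 0 < w i" using w_def Lcm_div_pos[of "{0..d}" \<alpha>] \<alpha>_pos by simp
  have "(\<lambda>i. int (w i)) ` {0..d} = (\<lambda>i. int (Lcm (\<alpha> ` {0..d}) div \<alpha> i)) ` {0..d}"
    using w_def by (intro image_cong) auto
  then have coprime: "Gcd ((\<lambda>i. int (w i)) ` {0..d}) = 1"
    using Gcd_Lcm_div_eq_1[of "{0..d}" \<alpha>] \<alpha>_pos by simp
  interpret triangular_simplex d a b w
    using cond_i cond_iii w_pos by unfold_locales auto
  show ?thesis
    unfolding V_def g_lcm
    using IP_lattice_simplex_vtx reduced_weight_vtx[OF coprime] dual_vertex_vtx U_recursion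
      gorenstein_indices_vtx[OF gl_pos]
    by (simp add: W_def)
qed

end
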